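(* Let $n$ be a positive integer and let $\varphi(n)$ denote the minimum of all sums $r_1+s_1+s_2+\dots+s_t$, taken over all $t\in\mathbb N$ and all positive integers $r_1,\dots,r_t,s_1,\dots,s_t$ such that $n=\sum_{i=1}^t r_is_i$ and $r_1>r_2>\dots>r_t$ (the last condition being vacuous for $t=1$). Then: (i) there is a uniquely determined positive integer $k$ such that $k^2-k+1\le n\le k^2+k$; (ii) if $n\le k^2$ then $\varphi(n)=2k$; (iii) if $k^2+1\le n$ then $\varphi(n)=2k+1$.
   Context: $\mathbb N$ denotes the set of positive integers. No ordering condition is imposed on the $s_i$. *)

theory Defs
  imports Main
begin

definition admissible :: "nat \<Rightarrow> nat \<Rightarrow> (nat \<Rightarrow> nat) \<Rightarrow> (nat \<Rightarrow> nat) \<Rightarrow> bool" where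
  "admissible n t r s \<longleftrightarrow> t \<ge> 1 \<and> (\<forall>i\<in>{1..t}. r i > 0 \<and> s i > 0)
     \<and> n = (\<Sum>i=1..t. r i * s i)
     \<and> (\<forall>i. 1 \<le> i \<and> i < t \<longrightarrow> r i > r (Suc i))"

definition phi :: "nat \<Rightarrow> nat" where
  "phi n = Inf {r 1 + (\<Sum>i=1..t. s i) | t r s. admissible n t r s}"

end

theory Submission
  imports Defs
begin

text \<open>A representation has cost r1 + \<Sum> si \<ge> 2 sqrt (r1 \<Sum> si) \<ge> 2 sqrt n, since r1 is the
  largest ri. Hence phi n \<ge> \<lceil>2 sqrt n\<rceil>, and the two-term representations n = k a + j
  (r1 = k, s1 = a, r2 = j, s2 = 1) attain this bound: it equals 2k on [k^2-k+1, k^2] and 2k+1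
  on [k^2+1, k^2+k].
  These intervals tile the positive integers, as each one starts right after its predecessor ends.\<close>

definition representation_costs :: "nat \<Rightarrow> nat set" where
  "representation_costs n = {r 1 + (\<Sum>i=1..t. s i) | t r s. admissible n t r s}"

lemma phi_eq_Inf_representation_costs: "phi n = Inf (representation_costs n)"
  unfolding phi_def representation_costs_def ..

lemma admissible_le_first:
  assumes "admissible n t r s" "1 \<le> i" "i \<le> t"
  shows "r i \<le> r 1"
  using assms(2,3)
proof (induction i rule: dec_induct)
  case base
  then show ?case by simp
next
  case (step m)
  then have "r (Suc m) < r m" using assms(1) unfolding admissible_def by auto
  with step show ?case by simp
qed

lemma admissible_le_first_mult_sum:
  assumes "admissible n t r s"
  shows "n \<le> r 1 * (\<Sum>i=1..t. s i)"
proof -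
  have "n = (\<Sum>i=1..t. r i * s i)" using assms unfolding admissible_def by auto
  also have "\<dots> \<le> (\<Sum>i=1..t. r 1 * s i)"
    by (rule sum_mono) (use admissible_le_first[OF assms] in auto)
  also have "\<dots> = r 1 * (\<Sum>i=1..t. s i)" by (simp add: sum_distrib_left)
  finally show ?thesis .
qed

lemma four_mult_le_square_add: "4 * (a::nat) * b \<le> (a + b)^2"
proof -
  have "4 * int a * int b \<le> (int a + int b)^2"
    using zero_le_power2[of "int a - int b"] by (simp add: power2_eq_square algebra_simps)
  then show ?thesis by (metis of_nat_add of_nat_le_iff of_nat_mult of_nat_numeral of_nat_power)
qed

lemma representation_costs_lower_bound:
  assumes "c \<in> representation_costs n"
  shows "4 * n \<le> c^2"
proof -
  obtain t r s where adm: "admissible n t r s" and c: "c = r 1 + (\<Sum>i=1..t. s i)"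
    using assms unfolding representation_costs_def by blast
  have "4 * n \<le> 4 * r 1 * (\<Sum>i=1..t. s i)"
    using admissible_le_first_mult_sum[OF adm] by simp
  also have "\<dots> \<le> c^2" unfolding c by (rule four_mult_le_square_add)
  finally show ?thesis .
qed

lemma two_term_representation_cost:
  assumes "1 \<le> j" "j \<le> k" "0 < a \<or> j = k"
  shows "k + a + 1 \<in> representation_costs (k * a + j)"
proof (cases "j = k")
  case True
  then have "admissible (k * a + j) 1 (\<lambda>_. k) (\<lambda>_. a + 1)"
    using assms unfolding admissible_def by (auto simp: algebra_simps)
  then show ?thesis unfolding representation_costs_def by force
next
  case False
  define r where "r = (\<lambda>i::nat. if i = 1 then k else j)"
  define s where "s = (\<lambda>i::nat. if i = 1 then a else 1)"
  have two: "{1..2::nat} = {1, 2}" by auto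
  have "admissible (k * a + j) 2 r s"
    using assms False unfolding admissible_def r_def s_def two by (auto simp: algebra_simps)
  moreover have "r 1 + (\<Sum>i=1..2. s i) = k + a + 1" unfolding r_def s_def two by simp
  ultimately show ?thesis unfolding representation_costs_def by (metis (mono_tags, lifting) mem_Collect_eq)
qed

lemma phi_eqI:
  assumes "m \<in> representation_costs n" "(m - 1)^2 < 4 * n"
  shows "phi n = m"
  unfolding phi_eq_Inf_representation_costs
proof (rule cInf_eq_minimum[OF assms(1)])
  fix c assume "c \<in> representation_costs n"
  then have "(m - 1)^2 < c^2"
    using representation_costs_lower_bound assms(2) by (meson less_le_trans)
  then show "m \<le> c" using power_less_imp_less_base by fastforce
qed

lemma phi_eq_double:
  fixes k :: nat
  assumes "0 < k" "k * (k - 1) < n" "n \<le> k^2"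
  shows "phi n = 2 * k"
proof (rule phi_eqI)
  define j where "j = n - k * (k - 1)"
  have n: "n = k * (k - 1) + j" and j: "1 \<le> j" "j \<le> k"
    using assms unfolding j_def by (auto simp: power2_eq_square diff_mult_distrib2)
  have "k + (k - 1) + 1 \<in> representation_costs (k * (k - 1) + j)"
    using j by (intro two_term_representation_cost) auto
  then show "2 * k \<in> representation_costs n" using assms(1) n by (simp add: mult_2)
  have "(2 * k - 1)^2 = 4 * (k * (k - 1)) + 1"
    using assms(1) by (cases k) (auto simp: power2_eq_square algebra_simps)
  then show "(2 * k - 1)^2 < 4 * n" using assms(2) by simp
qed

lemma phi_eq_double_Suc:
  fixes k :: nat
  assumes "k^2 < n" "n \<le> k^2 + k"
  shows "phi n = 2 * k + 1"
proof (rule phi_eqI)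
  have "k + k + 1 \<in> representation_costs (k * k + (n - k^2))"
    using assms by (intro two_term_representation_cost) auto
  then show "2 * k + 1 \<in> representation_costs n"
    using assms(1) by (simp add: power2_eq_square mult_2)
  show "(2 * k + 1 - 1)^2 < 4 * n" using assms(1) by (simp add: power_mult_distrib)
qed

lemma square_intervals_cover:
  fixes n :: nat
  assumes "0 < n"
  shows "\<exists>k>0. k * (k - 1) < n \<and> n \<le> k^2 + k"
  using assms
proof (induction n rule: nat_induct_non_zero)
  case 1
  show ?case by (intro exI[of _ 1]) simp
next
  case (Suc n)
  then obtain k where k: "0 < k" "k * (k - 1) < n" "n \<le> k^2 + k" by blast
  show ?case
  proof (cases "n = k^2 + k")
    case True
    then show ?thesis by (intro exI[of _ "Suc k"]) (simp add: power2_eq_square)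
  next
    case False
    with k show ?thesis by auto
  qed
qed

lemma square_intervals_disjoint:
  fixes k :: nat
  assumes "k < k'" "n \<le> k^2 + k"
  shows "\<not> k' * (k' - 1) < n"
proof -
  have "k^2 + k = k * (k + 1)" by (simp add: power2_eq_square)
  also have "\<dots> \<le> (k' - 1) * k'" using assms(1) by (intro mult_mono) auto
  finally show ?thesis using assms(2) by (simp add: mult.commute)
qed

lemma square_minus_plus_one: "0 < (k::nat) \<Longrightarrow> k^2 - k + 1 \<le> n \<longleftrightarrow> k * (k - 1) < n"
  by (cases k) (auto simp: power2_eq_square)

theorem theorem8p1:
  fixes n :: nat
  assumes "n > 0"
  shows "(\<exists>!k::nat. k > 0 \<and> k^2 - k + 1 \<le> n \<and> n \<le> k^2 + k)
       \<and> (\<forall>k::nat. k > 0 \<and> k^2 - k + 1 \<le> n \<and> n \<le> k^2 + k \<longrightarrow>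
            (n \<le> k^2 \<longrightarrow> phi n = 2 * k) \<and> (k^2 + 1 \<le> n \<longrightarrow> phi n = 2 * k + 1))"
proof (intro conjI allI impI)
  show "\<exists>!k. k > 0 \<and> k^2 - k + 1 \<le> n \<and> n \<le> k^2 + k"
  proof (rule ex_ex1I)
    show "\<exists>k. k > 0 \<and> k^2 - k + 1 \<le> n \<and> n \<le> k^2 + k"
      using square_intervals_cover[OF assms] square_minus_plus_one by blast
  next
    fix k k' assume "k > 0 \<and> k^2 - k + 1 \<le> n \<and> n \<le> k^2 + k"
      and "k' > 0 \<and> k'^2 - k' + 1 \<le> n \<and> n \<le> k'^2 + k'"
    then show "k = k'"
      using square_intervals_disjoint square_minus_plus_one by (metis linorder_neqE_nat)
  qed
next
  fix k assume k: "k > 0 \<and> k^2 - k + 1 \<le> n \<and> n \<le> k^2 + k"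
  then show "n \<le> k^2 \<Longrightarrow> phi n = 2 * k"
    using phi_eq_double square_minus_plus_one by blast
  show "k^2 + 1 \<le> n \<Longrightarrow> phi n = 2 * k + 1"
    using k phi_eq_double_Suc by simp
qed

end
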